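(* Let $k$ be an étale algebra over $\mathbb{Q}$ with maximal order $\mathcal{O}_k$, and let $\mathcal{O}'\subset\mathcal{O}\subset\mathcal{O}_k$ be orders with conductors $\mathfrak{f}'$ and $\mathfrak{f}$ respectively. Then $\mathfrak{f}'\subset\mathfrak{f}$. If $p$ is a prime number such that $p\mid N(\mathfrak{f})$ and $p\nmid(\mathcal{O}:\mathcal{O}')$, then $\mathfrak{f}'_p=\mathfrak{f}_p$.
   Context: An étale algebra is $k=k_1\oplus\cdots\oplus k_s$ with number fields $k_i$; $\mathcal{O}_k=\oplus\mathcal{O}_{k_i}$. An order is a subring of $\mathcal{O}_k$ with unit of finite index. The conductor of an order $\mathcal{O}$ is the largest $\mathcal{O}_k$-ideal contained in $\mathcal{O}$. For an integral invertible $\mathcal{O}_k$-ideal $\mathfrak{a}=\oplus\mathfrak{a}_i$, its norm is $N(\mathfrak{a})=\prod N(\mathfrak{a}_i)=(\mathcal{O}_k:\mathfrak{a})$, and its $p$-part $\mathfrak{a}_p$ is $\oplus_i\mathfrak{a}_{i,p}$, where $\mathfrak{a}_{i,p}$ is the product of the prime-power factors of $\mathfrak{a}_i$ at primes above $p$; equivalently $\mathfrak{a}_p=\mathfrak{a}+p^a\mathcal{O}_k$ for all sufficiently large $a$. *)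

theory Defs
  imports "HOL-Computational_Algebra.Computational_Algebra"
begin

text \<open>A number field, realised (via a complex embedding) as a subfield of the complex
numbers that is finite-dimensional over the rationals.\<close>
definition number_field :: "complex set \<Rightarrow> bool" where
  "number_field K \<longleftrightarrow>
     0 \<in> K \<and> 1 \<in> K \<and>
     (\<forall>x\<in>K. \<forall>y\<in>K. x + y \<in> K \<and> x - y \<in> K \<and> x * y \<in> K) \<and>
     (\<forall>x\<in>K. x \<noteq> 0 \<longrightarrow> inverse x \<in> K) \<and>
     (\<exists>B. finite B \<and> B \<subseteq> K \<and>
        (\<forall>x\<in>K. \<exists>q. (\<forall>b\<in>B. q b \<in> \<rat>) \<and> x = (\<Sum>b\<in>B. q b * b)))"

text \<open>The etale algebra k = K_0 + ... + K_(s-1): elements are tuples indexed by i < s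
(with value 0 outside), operations componentwise.\<close>
definition etale :: "nat \<Rightarrow> (nat \<Rightarrow> complex set) \<Rightarrow> (nat \<Rightarrow> complex) set" where
  "etale s K = {x. (\<forall>i<s. x i \<in> K i) \<and> (\<forall>i\<ge>s. x i = 0)}"

definition max_order :: "nat \<Rightarrow> (nat \<Rightarrow> complex set) \<Rightarrow> (nat \<Rightarrow> complex) set" where
  "max_order s K = {x \<in> etale s K. \<forall>i<s. algebraic_int (x i)}"

definition one_e :: "nat \<Rightarrow> nat \<Rightarrow> complex" where
  "one_e s = (\<lambda>i. if i < s then 1 else 0)"

definition add_e :: "(nat \<Rightarrow> complex) \<Rightarrow> (nat \<Rightarrow> complex) \<Rightarrow> nat \<Rightarrow> complex" where
  "add_e x y = (\<lambda>i. x i + y i)"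

definition mul_e :: "(nat \<Rightarrow> complex) \<Rightarrow> (nat \<Rightarrow> complex) \<Rightarrow> nat \<Rightarrow> complex" where
  "mul_e x y = (\<lambda>i. x i * y i)"

definition neg_e :: "(nat \<Rightarrow> complex) \<Rightarrow> nat \<Rightarrow> complex" where
  "neg_e x = (\<lambda>i. - x i)"

definition cosets :: "(nat \<Rightarrow> complex) set \<Rightarrow> (nat \<Rightarrow> complex) set \<Rightarrow> (nat \<Rightarrow> complex) set set" where
  "cosets A B = {{add_e x b | b. b \<in> B} | x. x \<in> A}"

definition index :: "(nat \<Rightarrow> complex) set \<Rightarrow> (nat \<Rightarrow> complex) set \<Rightarrow> nat" where
  "index A B = card (cosets A B)"

definition is_order :: "nat \<Rightarrow> (nat \<Rightarrow> complex set) \<Rightarrow> (nat \<Rightarrow> complex) set \<Rightarrow> bool" where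
  "is_order s K R \<longleftrightarrow>
     R \<subseteq> max_order s K \<and> one_e s \<in> R \<and>
     (\<forall>x\<in>R. \<forall>y\<in>R. add_e x y \<in> R \<and> mul_e x y \<in> R \<and> neg_e x \<in> R) \<and>
     finite (cosets (max_order s K) R)"

definition Ok_ideal :: "nat \<Rightarrow> (nat \<Rightarrow> complex set) \<Rightarrow> (nat \<Rightarrow> complex) set \<Rightarrow> bool" where
  "Ok_ideal s K I \<longleftrightarrow>
     I \<subseteq> max_order s K \<and> (\<lambda>i. 0) \<in> I \<and>
     (\<forall>x\<in>I. \<forall>y\<in>I. add_e x y \<in> I \<and> neg_e x \<in> I) \<and>
     (\<forall>x\<in>I. \<forall>r\<in>max_order s K. mul_e r x \<in> I)"

definition conductor :: "nat \<Rightarrow> (nat \<Rightarrow> complex set) \<Rightarrow> (nat \<Rightarrow> complex) set \<Rightarrow> (nat \<Rightarrow> complex) set" where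
  "conductor s K R = \<Union>{I. Ok_ideal s K I \<and> I \<subseteq> R}"

definition ideal_norm :: "nat \<Rightarrow> (nat \<Rightarrow> complex set) \<Rightarrow> (nat \<Rightarrow> complex) set \<Rightarrow> nat" where
  "ideal_norm s K I = index (max_order s K) I"

text \<open>a + p^n O_k; the p-part of a is this set for all sufficiently large n.\<close>
definition ppart_approx :: "nat \<Rightarrow> (nat \<Rightarrow> complex set) \<Rightarrow> (nat \<Rightarrow> complex) set \<Rightarrow> nat \<Rightarrow> nat \<Rightarrow> (nat \<Rightarrow> complex) set" where
  "ppart_approx s K I p n =
     {add_e x (\<lambda>i. of_nat (p ^ n) * y i) | x y. x \<in> I \<and> y \<in> max_order s K}"

end

theory Submission
  imports Defs "Jordan_Normal_Form.Char_Poly" "HOL-Library.Function_Algebras"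
begin

text \<open>The conductor of an order is the union of the \<open>O\<^sub>k\<close>-ideals it contains, so it is
monotone in the order. For the \<open>p\<close>-parts let \<open>m = (O : O')\<close>. Multiplication by \<open>m\<close>
kills \<open>O/O'\<close>, so \<open>m f\<close> is an \<open>O\<^sub>k\<close>-ideal inside \<open>O'\<close>, whence \<open>m f \<subseteq> f' \<subseteq> f\<close>.
If \<open>p\<close> does not divide \<open>m\<close>, then \<open>1 = a m + b p\<^sup>n\<close> for integers \<open>a, b\<close>, and every
\<open>x + p\<^sup>n y\<close> with \<open>x \<in> f\<close> equals \<open>m (a x) + p\<^sup>n (b x + y)\<close> with \<open>m (a x) \<in> f'\<close>.
The one non-formal ingredient is that \<open>O\<^sub>k\<close> is closed under addition, i.e. that algebraic
integers form a ring: \<open>x + y\<close> stabilises the finitely generated \<open>\<int>\<close>-module spanned by the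
\<open>x\<^sup>i y\<^sup>j\<close>, so it is an eigenvalue of an integer matrix and thus a root of its monic
characteristic polynomial.\<close>

definition int_span :: "('a \<Rightarrow> complex) \<Rightarrow> 'a set \<Rightarrow> complex set" where
  "int_span v S = range (\<lambda>c. \<Sum>k\<in>S. of_int (c k) * v k)"

lemma int_span_iff: "z \<in> int_span v S \<longleftrightarrow> (\<exists>c. z = (\<Sum>k\<in>S. of_int (c k) * v k))"
  by (auto simp: int_span_def)

lemma int_span_generator:
  assumes "finite S" "s \<in> S"
  shows "v s \<in> int_span v S"
proof -
  have "(\<Sum>k\<in>S. of_int (if k = s then 1 else 0) * v k) = (\<Sum>k\<in>S. if k = s then v k else 0)"
    by (rule sum.cong) auto
  also have "\<dots> = v s" using assms by simp
  finally have "(\<Sum>k\<in>S. of_int (if k = s then 1 else 0) * v k) = v s" .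
  then show ?thesis unfolding int_span_iff by metis
qed

lemma int_span_zero: "0 \<in> int_span v S"
  unfolding int_span_iff by (rule exI[of _ "\<lambda>_. 0"]) simp

lemma int_span_add:
  assumes "a \<in> int_span v S" "b \<in> int_span v S"
  shows "a + b \<in> int_span v S"
proof -
  obtain c1 c2 where "a = (\<Sum>k\<in>S. of_int (c1 k) * v k)" "b = (\<Sum>k\<in>S. of_int (c2 k) * v k)"
    using assms unfolding int_span_iff by blast
  then show ?thesis unfolding int_span_iff
    by (intro exI[of _ "\<lambda>k. c1 k + c2 k"]) (simp add: sum.distrib distrib_right)
qed

lemma int_span_mult_of_int:
  assumes "a \<in> int_span v S"
  shows "of_int m * a \<in> int_span v S"
proof -
  obtain c where "a = (\<Sum>k\<in>S. of_int (c k) * v k)"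
    using assms unfolding int_span_iff by blast
  then show ?thesis unfolding int_span_iff
    by (intro exI[of _ "\<lambda>k. m * c k"]) (simp add: sum_distrib_left mult.assoc)
qed

lemma int_span_sum:
  "finite A \<Longrightarrow> (\<And>a. a \<in> A \<Longrightarrow> f a \<in> int_span v S) \<Longrightarrow> (\<Sum>a\<in>A. f a) \<in> int_span v S"
  by (induction A rule: finite_induct) (auto intro: int_span_add int_span_zero)

lemma algebraic_int_if_int_eigenvector:
  fixes v :: "nat \<Rightarrow> complex" and C :: "nat \<Rightarrow> nat \<Rightarrow> int"
  assumes "j0 < n" "v j0 \<noteq> 0"
    and C: "\<And>j. j < n \<Longrightarrow> x * v j = (\<Sum>k<n. of_int (C j k) * v k)"
  shows "algebraic_int x"
proof -
  define A :: "int mat" where "A = mat n n (\<lambda>(j, k). C j k)"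
  define w where "w = vec n v"
  have A: "A \<in> carrier_mat n n" by (simp add: A_def)
  have A': "map_mat of_int A \<in> carrier_mat n n" using A by simp
  have "map_mat (of_int :: int \<Rightarrow> complex) A *\<^sub>v w = x \<cdot>\<^sub>v w"
  proof (rule eq_vecI)
    fix i assume "i < dim_vec (x \<cdot>\<^sub>v w)"
    then have i: "i < n" by (simp add: w_def)
    have "(map_mat of_int A *\<^sub>v w) $ i = (\<Sum>k\<in>{0..<n}. of_int (C i k) * v k)"
      using i by (simp add: A_def w_def scalar_prod_def row_def)
    also have "\<dots> = x * v i" using C[OF i] by (simp add: atLeast0LessThan)
    finally show "(map_mat of_int A *\<^sub>v w) $ i = (x \<cdot>\<^sub>v w) $ i" using i by (simp add: w_def)
  qed (simp add: w_def A_def)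
  moreover have "w \<noteq> 0\<^sub>v n"
  proof
    assume "w = 0\<^sub>v n"
    then have "vec_index w j0 = 0" using assms(1) by simp
    then show False using assms(1,2) by (simp add: w_def)
  qed
  ultimately have "eigenvector (map_mat of_int A) w x"
    using A' unfolding eigenvector_def by (simp add: w_def)
  then have "eigenvalue (map_mat of_int A) x"
    unfolding eigenvalue_def by blast
  then have "poly (char_poly (map_mat of_int A)) x = 0"
    using eigenvalue_root_char_poly[OF A'] by blast
  then have "poly (map_poly of_int (char_poly A)) x = 0"
    using of_int_hom.char_poly_hom[OF A] by metis
  moreover have "lead_coeff (char_poly A) = 1"
    using degree_monic_char_poly[OF A] by simp
  ultimately show ?thesis unfolding algebraic_int_altdef_ipoly by blast
qed

lemma algebraic_int_if_mult_closed_int_span: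
  fixes v :: "'a \<Rightarrow> complex"
  assumes "finite S" "s0 \<in> S" "v s0 \<noteq> 0"
    and closed: "\<And>s. s \<in> S \<Longrightarrow> x * v s \<in> int_span v S"
  shows "algebraic_int x"
proof -
  define n where "n = card S"
  obtain h where h: "bij_betw h {..<n} S"
    using ex_bij_betw_nat_finite[OF assms(1)] by (auto simp: n_def atLeast0LessThan)
  obtain j0 where j0: "j0 < n" "h j0 = s0" using h assms(2) unfolding bij_betw_def by force
  have "\<exists>c. x * v (h j) = (\<Sum>k<n. of_int (c k) * v (h k))" if "j < n" for j
  proof -
    have "h j \<in> S" using h that by (auto simp: bij_betw_def)
    then obtain c where "x * v (h j) = (\<Sum>k\<in>S. of_int (c k) * v k)"
      using closed unfolding int_span_iff by blast
    also have "\<dots> = (\<Sum>k<n. of_int (c (h k)) * v (h k))"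
      using sum.reindex_bij_betw[OF h, of "\<lambda>k. of_int (c k) * v k"] by simp
    finally show ?thesis by (intro exI[of _ "c \<circ> h"]) simp
  qed
  then obtain C where "\<And>j. j < n \<Longrightarrow> x * v (h j) = (\<Sum>k<n. of_int (C j k) * v (h k))"
    by metis
  then show ?thesis
    by (intro algebraic_int_if_int_eigenvector[of j0 n "v \<circ> h"]) (use j0 assms(3) in auto)
qed

lemma degree_pos_if_monic_root:
  fixes x :: complex and p :: "int poly"
  assumes "poly (map_poly of_int p) x = 0" "lead_coeff p = 1"
  shows "degree p > 0"
  using assms by (cases "degree p") (auto simp: poly_altdef degree_map_poly coeff_map_poly)

lemma power_in_int_span_if_monic_root:
  fixes x :: complex and p :: "int poly"
  assumes root: "poly (map_poly of_int p) x = 0" and monic: "lead_coeff p = 1"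
  shows "x ^ e \<in> int_span (\<lambda>k. x ^ k) {..<degree p}"
proof (induction e rule: less_induct)
  case (less e)
  define d where "d = degree p"
  show ?case
  proof (cases "e < d")
    case True then show ?thesis by (intro int_span_generator) (auto simp: d_def)
  next
    case False
    have "0 = (\<Sum>k\<le>d. of_int (coeff p k) * x ^ k)"
      using root by (simp add: poly_altdef degree_map_poly d_def coeff_map_poly)
    also have "\<dots> = (\<Sum>k<d. of_int (coeff p k) * x ^ k) + x ^ d"
      using monic by (simp add: lessThan_Suc_atMost[symmetric] d_def)
    finally have xd: "x ^ d = - (\<Sum>k<d. of_int (coeff p k) * x ^ k)"
      by (simp add: eq_neg_iff_add_eq_0 add.commute)
    have "x ^ e = x ^ (e - d) * x ^ d" using False by (simp flip: power_add)
    also have "\<dots> = (\<Sum>k<d. of_int (- coeff p k) * x ^ (e - d + k))"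
      by (simp add: xd sum_distrib_left power_add algebra_simps sum_negf)
    finally have eq: "x ^ e = (\<Sum>k<d. of_int (- coeff p k) * x ^ (e - d + k))" .
    have "d > 0" using degree_pos_if_monic_root[OF root monic] by (simp add: d_def)
    then show ?thesis unfolding eq d_def[symmetric]
      using less False by (intro int_span_sum int_span_mult_of_int) (auto simp: d_def)
  qed
qed

lemma algebraic_int_add:
  fixes x y :: complex
  assumes "algebraic_int x" "algebraic_int y"
  shows "algebraic_int (x + y)"
proof -
  obtain p where p: "poly (map_poly of_int p) x = 0" "lead_coeff p = 1"
    using assms(1) unfolding algebraic_int_altdef_ipoly by blast
  obtain q where q: "poly (map_poly of_int q) y = 0" "lead_coeff q = 1"
    using assms(2) unfolding algebraic_int_altdef_ipoly by blast
  define S where "S = {..<degree p} \<times> {..<degree q}"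
  define v where "v = (\<lambda>(i, j). x ^ i * y ^ (j::nat))"
  have fin: "finite S" by (simp add: S_def)
  have left: "z * y ^ j \<in> int_span v S"
    if z: "z \<in> int_span (\<lambda>k. x ^ k) {..<degree p}" and j: "j < degree q" for z j
  proof -
    obtain c where "z = (\<Sum>k<degree p. of_int (c k) * x ^ k)"
      using z unfolding int_span_iff by blast
    then have "z * y ^ j = (\<Sum>k<degree p. of_int (c k) * v (k, j))"
      by (simp add: sum_distrib_right v_def mult.assoc)
    also have "\<dots> \<in> int_span v S"
      using j by (intro int_span_sum int_span_mult_of_int int_span_generator fin) (auto simp: S_def)
    finally show ?thesis .
  qed
  have right: "x ^ i * z \<in> int_span v S"
    if z: "z \<in> int_span (\<lambda>k. y ^ k) {..<degree q}" and i: "i < degree p" for z i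
  proof -
    obtain c where "z = (\<Sum>k<degree q. of_int (c k) * y ^ k)"
      using z unfolding int_span_iff by blast
    then have "x ^ i * z = (\<Sum>k<degree q. of_int (c k) * v (i, k))"
      by (simp add: sum_distrib_left v_def mult.left_commute)
    also have "\<dots> \<in> int_span v S"
      using i by (intro int_span_sum int_span_mult_of_int int_span_generator fin) (auto simp: S_def)
    finally show ?thesis .
  qed
  show ?thesis
  proof (rule algebraic_int_if_mult_closed_int_span[OF fin, of "(0, 0)" v])
    show "(0, 0) \<in> S"
      using degree_pos_if_monic_root[OF p] degree_pos_if_monic_root[OF q] by (simp add: S_def)
    show "v (0, 0) \<noteq> 0" by (simp add: v_def)
    fix s assume "s \<in> S"
    then obtain i j where s: "s = (i, j)" "i < degree p" "j < degree q" by (auto simp: S_def)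
    have "(x + y) * v s = x ^ Suc i * y ^ j + x ^ i * y ^ Suc j"
      by (simp add: s v_def algebra_simps)
    also have "\<dots> \<in> int_span v S"
      by (intro int_span_add left right s power_in_int_span_if_monic_root p q)
    finally show "(x + y) * v s \<in> int_span v S" .
  qed
qed

definition is_add_subgroup :: "'a::ab_group_add set \<Rightarrow> bool" where
  "is_add_subgroup H \<longleftrightarrow> 0 \<in> H \<and> (\<forall>a\<in>H. \<forall>b\<in>H. a + b \<in> H) \<and> (\<forall>a\<in>H. - a \<in> H)"

lemma is_add_subgroupD:
  assumes "is_add_subgroup H"
  shows "0 \<in> H" "a \<in> H \<Longrightarrow> b \<in> H \<Longrightarrow> a + b \<in> H" "a \<in> H \<Longrightarrow> - a \<in> H"
  using assms unfolding is_add_subgroup_def by auto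

lemma add_subgroup_sum:
  "is_add_subgroup H \<Longrightarrow> (\<And>a. a \<in> A \<Longrightarrow> f a \<in> H) \<Longrightarrow> sum f A \<in> H"
  by (induction A rule: infinite_finite_induct) (auto intro: is_add_subgroupD)

lemma add_subgroup_set_plus:
  assumes I: "is_add_subgroup I" and J: "is_add_subgroup J"
  shows "is_add_subgroup {a + b | a b. a \<in> I \<and> b \<in> J}"
  unfolding is_add_subgroup_def
proof (intro conjI ballI)
  show "0 \<in> {a + b | a b. a \<in> I \<and> b \<in> J}"
    using is_add_subgroupD(1)[OF I] is_add_subgroupD(1)[OF J] by force
next
  fix u v assume "u \<in> {a + b | a b. a \<in> I \<and> b \<in> J}" "v \<in> {a + b | a b. a \<in> I \<and> b \<in> J}"
  then obtain a b a' b' where "u = a + b" "v = a' + b'" "a \<in> I" "b \<in> J" "a' \<in> I" "b' \<in> J"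
    by blast
  then have "u + v = (a + a') + (b + b')" "a + a' \<in> I" "b + b' \<in> J"
    using is_add_subgroupD(2)[OF I] is_add_subgroupD(2)[OF J] by (simp_all add: algebra_simps)
  then show "u + v \<in> {a + b | a b. a \<in> I \<and> b \<in> J}" by blast
next
  fix u assume "u \<in> {a + b | a b. a \<in> I \<and> b \<in> J}"
  then obtain a b where "u = a + b" "a \<in> I" "b \<in> J" by blast
  then have "- u = - a + - b" "- a \<in> I" "- b \<in> J"
    using is_add_subgroupD(3)[OF I] is_add_subgroupD(3)[OF J] by simp_all
  then show "- u \<in> {a + b | a b. a \<in> I \<and> b \<in> J}" by blast
qed

lemma add_subgroup_image_mult:
  fixes H :: "'a::ring set"
  assumes H: "is_add_subgroup H"
  shows "is_add_subgroup ((*) c ` H)"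
  unfolding is_add_subgroup_def
proof (intro conjI ballI)
  show "0 \<in> (*) c ` H" using is_add_subgroupD(1)[OF H] by (force intro: image_eqI[of 0])
  show "u + v \<in> (*) c ` H" if "u \<in> (*) c ` H" "v \<in> (*) c ` H" for u v
    using that is_add_subgroupD(2)[OF H] by (auto simp flip: distrib_left)
  show "- u \<in> (*) c ` H" if "u \<in> (*) c ` H" for u
    using that is_add_subgroupD(3)[OF H] by (auto simp flip: mult_minus_right)
qed

lemma add_subgroup_of_nat_mult:
  fixes H :: "'a::ring_1 set"
  assumes H: "is_add_subgroup H" and x: "x \<in> H"
  shows "of_nat n * x \<in> H"
  by (induction n) (auto simp: distrib_right intro: is_add_subgroupD[OF H] x)

lemma add_subgroup_of_int_mult:
  fixes H :: "'a::ring_1 set"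
  assumes H: "is_add_subgroup H" and x: "x \<in> H"
  shows "of_int c * x \<in> H"
  by (cases c rule: int_cases2) (use add_subgroup_of_nat_mult[OF H x] is_add_subgroupD(3)[OF H] in auto)

lemma add_coset_eq_iff:
  assumes "is_add_subgroup H"
  shows "{x + b | b. b \<in> H} = {z + b | b. b \<in> H} \<longleftrightarrow> x - z \<in> H"
proof
  assume eq: "{x + b | b. b \<in> H} = {z + b | b. b \<in> H}"
  have "x \<in> {x + b | b. b \<in> H}" using is_add_subgroupD(1)[OF assms] by force
  then obtain b where "b \<in> H" "x = z + b" by (auto simp: eq)
  then show "x - z \<in> H" by simp
next
  assume d: "x - z \<in> H"
  have "x + b = z + ((x - z) + b)" "z + b = x + (- (x - z) + b)" for b by simp_all
  then show "{x + b | b. b \<in> H} = {z + b | b. b \<in> H}"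
    using d is_add_subgroupD[OF assms] by blast
qed

text \<open>Translation by \<open>y\<close> permutes the cosets; comparing the sums of chosen representatives
before and after translating puts (number of cosets) \<open>\<cdot> y\<close> into \<open>H\<close>.\<close>

lemma of_nat_card_cosets_mult_mem:
  fixes G H :: "'a::ring_1 set"
  assumes H: "is_add_subgroup H"
    and G_add: "\<And>a b. a \<in> G \<Longrightarrow> b \<in> G \<Longrightarrow> a + b \<in> G"
    and fin: "finite {{x + b | b. b \<in> H} | x. x \<in> G}" and y: "y \<in> G"
  shows "of_nat (card {{x + b | b. b \<in> H} | x. x \<in> G}) * y \<in> H"
proof -
  define coset where "coset x = {x + b | b. b \<in> H}" for x
  define C where "C = {coset x | x. x \<in> G}"
  have C_eq: "{{x + b | b. b \<in> H} | x. x \<in> G} = C" by (simp add: C_def coset_def)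
  have coset_eq: "coset x = coset z \<longleftrightarrow> x - z \<in> H" for x z
    unfolding coset_def by (rule add_coset_eq_iff[OF H])
  define rep where "rep c = (SOME x. x \<in> G \<and> c = coset x)" for c
  have rep: "rep c \<in> G \<and> c = coset (rep c)" if "c \<in> C" for c
    using that someI_ex[of "\<lambda>x. x \<in> G \<and> c = coset x"] unfolding C_def rep_def by blast
  define shift where "shift c = coset (rep c + y)" for c
  have shift_C: "shift ` C \<subseteq> C"
  proof
    fix d assume "d \<in> shift ` C"
    then obtain c where "c \<in> C" "d = coset (rep c + y)" by (auto simp: shift_def)
    then show "d \<in> C" using rep G_add y unfolding C_def by blast
  qed
  have inj: "inj_on shift C"
  proof (rule inj_onI)
    fix c1 c2 assume c: "c1 \<in> C" "c2 \<in> C" "shift c1 = shift c2"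
    then have "coset (rep c1) = coset (rep c2)" by (simp add: shift_def coset_eq)
    then show "c1 = c2" using rep c by metis
  qed
  have "finite C" using fin C_eq by simp
  then have "shift ` C = C" using endo_inj_surj shift_C inj by blast
  then have "(\<Sum>c\<in>C. rep (shift c)) = (\<Sum>c\<in>C. rep c)"
    using sum.reindex[OF inj, of rep] by simp
  then have "(\<Sum>c\<in>C. rep (shift c) - (rep c + y)) = - (of_nat (card C) * y)"
    by (simp add: sum_subtractf sum.distrib)
  moreover have "rep (shift c) - (rep c + y) \<in> H" if "c \<in> C" for c
  proof -
    have "shift c \<in> C" using shift_C that by blast
    then have "coset (rep (shift c)) = coset (rep c + y)"
      using rep unfolding shift_def by metis
    then show ?thesis by (simp add: coset_eq)
  qed
  ultimately have "- (of_nat (card C) * y) \<in> H"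
    using add_subgroup_sum[OF H, of C "\<lambda>c. rep (shift c) - (rep c + y)"] by argo
  then show ?thesis
    using is_add_subgroupD(3)[OF H] C_eq by force
qed

lemma add_e_eq [simp]: "add_e x y = x + y" by (simp add: add_e_def fun_eq_iff)
lemma mul_e_eq [simp]: "mul_e x y = x * y" by (simp add: mul_e_def fun_eq_iff)
lemma neg_e_eq [simp]: "neg_e x = - x" by (simp add: neg_e_def fun_eq_iff)
lemma zero_fun_eq: "(\<lambda>i. 0) = 0" by (simp add: fun_eq_iff)

lemma max_order_add:
  assumes "\<forall>i<s. number_field (K i)" "x \<in> max_order s K" "y \<in> max_order s K"
  shows "x + y \<in> max_order s K"
  using assms algebraic_int_add unfolding max_order_def etale_def number_field_def by auto

lemma is_order_add_subgroup:
  assumes "is_order s K R"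
  shows "is_add_subgroup R"
proof -
  have closed: "one_e s \<in> R" "\<forall>x\<in>R. \<forall>y\<in>R. x + y \<in> R \<and> - x \<in> R"
    using assms unfolding is_order_def by auto
  then have "one_e s + - one_e s \<in> R" by blast
  then show ?thesis
    using closed unfolding is_add_subgroup_def by simp
qed

lemma Ok_idealD:
  assumes "Ok_ideal s K I"
  shows "is_add_subgroup I" "I \<subseteq> max_order s K"
    "x \<in> I \<Longrightarrow> r \<in> max_order s K \<Longrightarrow> r * x \<in> I"
  using assms unfolding Ok_ideal_def is_add_subgroup_def zero_fun_eq by auto

lemma Ok_idealI:
  assumes "is_add_subgroup I" "I \<subseteq> max_order s K"
    "\<And>x r. x \<in> I \<Longrightarrow> r \<in> max_order s K \<Longrightarrow> r * x \<in> I"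
  shows "Ok_ideal s K I"
  using assms unfolding Ok_ideal_def is_add_subgroup_def zero_fun_eq by auto

lemma mem_conductor_iff:
  "x \<in> conductor s K R \<longleftrightarrow> (\<exists>I. Ok_ideal s K I \<and> I \<subseteq> R \<and> x \<in> I)"
  unfolding conductor_def by blast

lemma conductor_mono: "R' \<subseteq> R \<Longrightarrow> conductor s K R' \<subseteq> conductor s K R"
  unfolding conductor_def by blast

lemma Ok_ideal_conductor:
  assumes "is_order s K R"
  shows "Ok_ideal s K (conductor s K R)"
proof (rule Ok_idealI)
  show "conductor s K R \<subseteq> max_order s K"
    using Ok_idealD(2) by (fastforce simp: mem_conductor_iff)
  show "r * x \<in> conductor s K R" if "x \<in> conductor s K R" "r \<in> max_order s K" for x r
    using that by (auto simp: mem_conductor_iff intro: Ok_idealD(3))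
  have R: "is_add_subgroup R" using is_order_add_subgroup[OF assms] .
  have zero: "0 \<in> conductor s K R"
  proof -
    have "Ok_ideal s K {0}"
      using R assms by (intro Ok_idealI) (auto simp: is_add_subgroup_def is_order_def)
    then show ?thesis using is_add_subgroupD(1)[OF R] by (auto simp: mem_conductor_iff)
  qed
  have add: "x + y \<in> conductor s K R" if xy: "x \<in> conductor s K R" "y \<in> conductor s K R" for x y
  proof -
    obtain I J where I: "Ok_ideal s K I" "I \<subseteq> R" "x \<in> I"
      and J: "Ok_ideal s K J" "J \<subseteq> R" "y \<in> J"
      using xy by (auto simp: mem_conductor_iff)
    define IJ where "IJ = {a + b | a b. a \<in> I \<and> b \<in> J}"
    have "Ok_ideal s K IJ"
    proof (rule Ok_idealI)
      show "is_add_subgroup IJ"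
        unfolding IJ_def by (intro add_subgroup_set_plus Ok_idealD(1)[OF I(1)] Ok_idealD(1)[OF J(1)])
      show "IJ \<subseteq> max_order s K"
        using I J R assms unfolding IJ_def is_order_def by (auto dest: is_add_subgroupD(2))
      show "r * z \<in> IJ" if "z \<in> IJ" "r \<in> max_order s K" for z r
        using that Ok_idealD(3)[OF I(1)] Ok_idealD(3)[OF J(1)]
        unfolding IJ_def by (fastforce simp: distrib_left)
    qed
    moreover have "IJ \<subseteq> R" using I(2) J(2) is_add_subgroupD(2)[OF R] by (auto simp: IJ_def)
    moreover have "x + y \<in> IJ" using I(3) J(3) by (auto simp: IJ_def)
    ultimately show ?thesis by (auto simp: mem_conductor_iff)
  qed
  have neg: "- x \<in> conductor s K R" if "x \<in> conductor s K R" for x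
    using that by (auto simp: mem_conductor_iff dest: Ok_idealD(1) is_add_subgroupD(3))
  show "is_add_subgroup (conductor s K R)"
    using zero add neg unfolding is_add_subgroup_def by blast
qed

lemma ppart_approx_eq:
  "ppart_approx s K I p n = {x + of_nat (p ^ n) * y | x y. x \<in> I \<and> y \<in> max_order s K}"
proof -
  have "(\<lambda>i. of_nat (p ^ n) * y i) = of_nat (p ^ n) * y" for y :: "nat \<Rightarrow> complex"
    unfolding of_nat_fun times_fun_def by (rule refl)
  then show ?thesis by (simp add: ppart_approx_def)
qed

lemma index_mult_mem_conductor:
  assumes R: "is_order s K R" and R': "is_order s K R'"
    and index: "index R R' \<noteq> 0" and x: "x \<in> conductor s K R"
  shows "of_nat (index R R') * x \<in> conductor s K R'"
proof -
  define m where "m = index R R'"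
  have cosets_eq: "cosets R R' = {{x + b | b. b \<in> R'} | x. x \<in> R}"
    unfolding cosets_def add_e_eq ..
  have "finite (cosets R R')" using index unfolding index_def by (meson card.infinite)
  then have index_mult: "of_nat m * u \<in> R'" if "u \<in> R" for u
    unfolding m_def index_def cosets_eq
    using of_nat_card_cosets_mult_mem[OF is_order_add_subgroup[OF R'] _ _ that]
      is_add_subgroupD(2)[OF is_order_add_subgroup[OF R]] cosets_eq
    by simp
  obtain I where I: "Ok_ideal s K I" "I \<subseteq> R" "x \<in> I"
    using x by (auto simp: mem_conductor_iff)
  have I_mult: "of_nat m * u \<in> I" if "u \<in> I" for u
    using add_subgroup_of_nat_mult[OF Ok_idealD(1)[OF I(1)] that] .
  have "Ok_ideal s K ((*) (of_nat m) ` I)"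
  proof (rule Ok_idealI)
    show "is_add_subgroup ((*) (of_nat m) ` I)"
      using add_subgroup_image_mult[OF Ok_idealD(1)[OF I(1)]] .
    show "(*) (of_nat m) ` I \<subseteq> max_order s K"
      using I_mult Ok_idealD(2)[OF I(1)] by blast
    show "r * u \<in> (*) (of_nat m) ` I"
      if u: "u \<in> (*) (of_nat m) ` I" and r: "r \<in> max_order s K" for u r
    proof -
      obtain v where "v \<in> I" "u = of_nat m * v" using u by blast
      then have "r * u = of_nat m * (r * v)" "r * v \<in> I"
        using Ok_idealD(3)[OF I(1)] r by (simp_all add: mult.left_commute)
      then show ?thesis by blast
    qed
  qed
  moreover have "(*) (of_nat m) ` I \<subseteq> R'" using index_mult I(2) by blast
  ultimately show ?thesis
    using I(3) by (auto simp: mem_conductor_iff m_def)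
qed

lemma ppart_approx_eq_if_coprime:
  assumes nf: "\<forall>i<s. number_field (K i)" and I: "Ok_ideal s K I" and "I' \<subseteq> I"
    and mult: "\<And>x. x \<in> I \<Longrightarrow> of_nat m * x \<in> I'" and "coprime m (p ^ n)"
  shows "ppart_approx s K I' p n = ppart_approx s K I p n"
proof
  show "ppart_approx s K I' p n \<subseteq> ppart_approx s K I p n"
    using \<open>I' \<subseteq> I\<close> unfolding ppart_approx_def by blast
next
  define P :: "nat \<Rightarrow> complex" where "P = of_nat (p ^ n)"
  obtain a b :: int where "a * int m + b * int (p ^ n) = 1"
    using bezout_int[of "int m" "int (p ^ n)"] \<open>coprime m (p ^ n)\<close>
    by (metis coprime_int_iff coprime_iff_gcd_eq_1)
  then have bezout: "of_int a * of_nat m + of_int b * P = 1"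
    unfolding P_def by (metis of_int_1 of_int_add of_int_mult of_int_of_nat_eq)
  show "ppart_approx s K I p n \<subseteq> ppart_approx s K I' p n"
  proof
    fix z assume "z \<in> ppart_approx s K I p n"
    then obtain x y where z: "z = x + P * y" and x: "x \<in> I" and y: "y \<in> max_order s K"
      by (auto simp: ppart_approx_eq P_def)
    have "of_int b * x \<in> max_order s K"
      using Ok_idealD(2)[OF I] add_subgroup_of_int_mult[OF Ok_idealD(1)[OF I] x] by blast
    then have y': "of_int b * x + y \<in> max_order s K"
      using max_order_add[OF nf _ y] by blast
    have x': "of_nat m * (of_int a * x) \<in> I'"
      using mult add_subgroup_of_int_mult[OF Ok_idealD(1)[OF I] x] by blast
    have "z = (of_int a * of_nat m + of_int b * P) * x + P * y"
      by (simp add: z bezout)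
    also have "\<dots> = of_nat m * (of_int a * x) + P * (of_int b * x + y)"
      by (simp add: algebra_simps)
    finally show "z \<in> ppart_approx s K I' p n"
      using x' y' by (auto simp: ppart_approx_eq P_def)
  qed
qed

theorem lemma2p1:
  fixes s :: nat and K :: "nat \<Rightarrow> complex set"
    and R R' :: "(nat \<Rightarrow> complex) set" and p :: nat
  assumes "\<forall>i<s. number_field (K i)"
    and "is_order s K R" and "is_order s K R'" and "R' \<subseteq> R"
  shows "conductor s K R' \<subseteq> conductor s K R \<and>
         (prime p \<and> p dvd ideal_norm s K (conductor s K R) \<and> \<not> p dvd index R R'
           \<longrightarrow> (\<forall>\<^sub>F n in sequentially.
                 ppart_approx s K (conductor s K R') p n = ppart_approx s K (conductor s K R) p n))"
proof -
  have "ppart_approx s K (conductor s K R') p n = ppart_approx s K (conductor s K R) p n"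
    if "prime p" "\<not> p dvd index R R'" for n
  proof (rule ppart_approx_eq_if_coprime[OF assms(1) Ok_ideal_conductor[OF assms(2)]])
    show "conductor s K R' \<subseteq> conductor s K R" using conductor_mono[OF assms(4)] .
    show "coprime (index R R') (p ^ n)"
      using that by (simp add: prime_imp_coprime coprime_commute)
    have "index R R' \<noteq> 0" using that(2) by (metis dvd_0_right)
    then show "of_nat (index R R') * x \<in> conductor s K R'" if "x \<in> conductor s K R" for x
      using index_mult_mem_conductor[OF assms(2,3) _ that] by blast
  qed
  then show ?thesis
    using conductor_mono[OF assms(4)] by (auto intro: always_eventually)
qed

end
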